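(* Under the assumptions below, let $y_\varrho\in Y$ be the solution of the continuous problem and $y_{\varrho h}\in Y_h$ the unique solution of the Galerkin problem, with the choice $\varrho=h^{2\alpha}$. Then there is a constant $c>0$ independent of $h$ and $\overline{y}$ such that $$\|y_\varrho-y_{\varrho h}\|_{H_Y}^2+h^{2\alpha}\|y_\varrho-y_{\varrho h}\|_D^2\le c\begin{cases}\|\overline{y}\|_{H_Y}^2&\text{for }\overline{y}\in H_Y,\\ h^{2\alpha}\|\overline{y}\|_D^2&\text{for }\overline{y}\in Y,\\ h^{4\alpha}\|D\overline{y}\|_{H_Y}^2&\text{for }\overline{y}\in Y,\ D\overline{y}\in H_Y.\end{cases}$$
   Context: Abstract setting: Let $Y\subset H_Y\subset Y^*$ be a Gelfand triple of real Hilbert spaces, with duality pairing $\langle\cdot,\cdot\rangle_{Y^*,Y}$ extending the inner product of $H_Y$. Let $D:Y\to Y^*$ be bounded, linear, self-adjoint and elliptic, $\|y\|_D:=\langle Dy,y\rangle_{Y^*,Y}^{1/2}$ (an equivalent norm on $Y$). For $y\in Y$ we write "$Dy\in H_Y$" if there is $w\in H_Y$ with $\langle Dy,v\rangle_{Y^*,Y}=\langle w,v\rangle_{H_Y}$ for all $v\in Y$, and then $\|Dy\|_{H_Y}:=\|w\|_{H_Y}$. Given $\overline{y}\in H_Y$ and $\varrho>0$, $y_\varrho\in Y$ is the unique solution of $\langle y_\varrho,y\rangle_{H_Y}+\varrho\langle Dy_\varrho,y\rangle_{Y^*,Y}=\langle\overline{y},y\rangle_{H_Y}$ for all $y\in Y$.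 Discretization: For each discretization parameter $h\in(0,h_0]$ let $Y_h\subset Y$ be a finite-dimensional subspace, and assume there are maps $P_h:Y\to Y_h$, an exponent $\alpha>0$ and constants $c_1,c_2,c_3,c_4>0$ independent of $h$ such that for all $y\in Y$: $\|y-P_hy\|_{H_Y}\le c_1h^\alpha\|y\|_D$ and $\|y-P_hy\|_D\le c_2\|y\|_D$; and, if in addition $Dy\in H_Y$: $\|y-P_hy\|_{H_Y}\le c_3h^{2\alpha}\|Dy\|_{H_Y}$ and $\|y-P_hy\|_D\le c_4h^\alpha\|Dy\|_{H_Y}$. The Galerkin solution $y_{\varrho h}\in Y_h$ satisfies $\langle y_{\varrho h},y_h\rangle_{H_Y}+\varrho\langle Dy_{\varrho h},y_h\rangle_{Y^*,Y}=\langle\overline{y},y_h\rangle_{H_Y}$ for all $y_h\in Y_h$. *)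

theory Defs
  imports "HOL-Analysis.Analysis"
begin

text \<open>The operator D : Y -> Y* is represented by its bilinear form d y v = <D y, v>.
  The energy norm ||y||_D = <D y, y>^(1/2).\<close>
definition Dnorm :: "('y \<Rightarrow> 'y \<Rightarrow> real) \<Rightarrow> 'y \<Rightarrow> real" where
  "Dnorm d y = sqrt (d y y)"

text \<open>"D y \<in> H_Y" with representative w: <D y, v> = (w, \<iota> v)_H for all v in Y.\<close>
definition D_repr :: "('y \<Rightarrow> 'h::real_inner) \<Rightarrow> ('y \<Rightarrow> 'y \<Rightarrow> real) \<Rightarrow> 'y \<Rightarrow> 'h \<Rightarrow> bool" where
  "D_repr \<iota> d y w \<longleftrightarrow> (\<forall>v. d y v = inner w (\<iota> v))"

end

theory Submission
  imports Defs
begin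

text \<open>Galerkin orthogonality makes \<open>y\<^sub>\<rho>\<^sub>h\<close> the best approximation of \<open>y\<^sub>\<rho>\<close> from \<open>Y\<^sub>h\<close>
  in the energy \<open>\<parallel>u\<parallel>\<^sub>H\<^sup>2 + \<rho> \<parallel>u\<parallel>\<^sub>D\<^sup>2\<close>, so the error is bounded by the energy of \<open>y\<^sub>\<rho>\<close>
  and of \<open>y\<^sub>\<rho> - P\<^sub>h y\<^sub>\<rho>\<close>. Testing the continuous problem with \<open>y\<^sub>\<rho>\<close> and with
  \<open>y\<^sub>\<rho> - ybar\<close>, and reading off \<open>D y\<^sub>\<rho> = (ybar - y\<^sub>\<rho>)/\<rho>\<close>, shows that \<open>y\<^sub>\<rho>\<close> is dominated
  by the data in each of the norms \<open>\<parallel>\<cdot>\<parallel>\<^sub>H\<close>, \<open>\<parallel>\<cdot>\<parallel>\<^sub>D\<close> and \<open>\<parallel>D\<cdot>\<parallel>\<^sub>H\<close>; with \<open>\<rho> = h\<^sup>2\<^sup>\<alpha>\<close>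
  the approximation properties of \<open>P\<^sub>h\<close> then give the three bounds.\<close>

lemma le_of_square_le_mult:
  fixes x b :: real
  assumes "x * x \<le> b * x" "0 \<le> x" "0 \<le> b"
  shows "x \<le> b"
  using assms by (cases "x = 0") (auto intro: mult_right_le_imp_le)

locale tikhonov_problem =
  fixes \<iota> :: "'y::real_vector \<Rightarrow> 'h::real_inner"
    and d :: "'y \<Rightarrow> 'y \<Rightarrow> real"
  assumes emb_linear: "linear \<iota>"
    and d_bilinear: "bilinear d"
    and d_sym: "\<And>u v. d u v = d v u"
    and d_nonneg: "\<And>u. 0 \<le> d u u"
begin

definition energy :: "real \<Rightarrow> 'y \<Rightarrow> real" where
  "energy \<rho> u = (norm (\<iota> u))\<^sup>2 + \<rho> * (Dnorm d u)\<^sup>2"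

definition solves_on :: "'y set \<Rightarrow> real \<Rightarrow> 'h \<Rightarrow> 'y \<Rightarrow> bool" where
  "solves_on V \<rho> ybar y \<longleftrightarrow> (\<forall>v\<in>V. inner (\<iota> y) (\<iota> v) + \<rho> * d y v = inner ybar (\<iota> v))"

lemma Dnorm_sq: "(Dnorm d u)\<^sup>2 = d u u"
  using d_nonneg by (simp add: Dnorm_def)

lemma energy_eq: "energy \<rho> u = inner (\<iota> u) (\<iota> u) + \<rho> * d u u"
  by (simp add: energy_def Dnorm_sq power2_norm_eq_inner)

lemma norm_sq_le_energy: "0 \<le> \<rho> \<Longrightarrow> (norm (\<iota> u))\<^sup>2 \<le> energy \<rho> u"
  by (simp add: energy_def)

lemma energy_nonneg: "0 \<le> \<rho> \<Longrightarrow> 0 \<le> energy \<rho> u"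
  by (simp add: energy_def)

lemma energy_add_orthogonal:
  assumes "inner (\<iota> e) (\<iota> u) + \<rho> * d e u = 0"
  shows "energy \<rho> (e + u) = energy \<rho> e + energy \<rho> u"
proof -
  have "d (e + u) (e + u) = d e e + 2 * d e u + d u u"
    using d_bilinear d_sym[of u e] by (simp add: bilinear_ladd bilinear_radd)
  with assms emb_linear show ?thesis
    by (simp add: energy_eq linear_add inner_add inner_commute algebra_simps)
qed

lemma solves_on_subset: "solves_on W \<rho> ybar y \<Longrightarrow> V \<subseteq> W \<Longrightarrow> solves_on V \<rho> ybar y"
  by (auto simp: solves_on_def)

lemma galerkin_orthogonality:
  assumes "solves_on V \<rho> ybar y" "solves_on V \<rho> ybar yh" "u \<in> V"
  shows "inner (\<iota> (y - yh)) (\<iota> u) + \<rho> * d (y - yh) u = 0"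
  using assms emb_linear d_bilinear
  by (simp add: solves_on_def linear_diff inner_diff_left bilinear_lsub algebra_simps)

lemma galerkin_best_approximation:
  assumes "subspace S" "solves_on S \<rho> ybar y" "yh \<in> S" "solves_on S \<rho> ybar yh"
    and "z \<in> S" "0 \<le> \<rho>"
  shows "energy \<rho> (y - yh) \<le> energy \<rho> (y - z)"
proof -
  have "yh - z \<in> S" using assms by (simp add: subspace_diff)
  then have "energy \<rho> ((y - yh) + (yh - z)) = energy \<rho> (y - yh) + energy \<rho> (yh - z)"
    using galerkin_orthogonality assms by (intro energy_add_orthogonal) blast
  then have "energy \<rho> (y - z) = energy \<rho> (y - yh) + energy \<rho> (yh - z)"
    by simp
  then show ?thesis using energy_nonneg[OF \<open>0 \<le> \<rho>\<close>, of "yh - z"] by linarith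
qed

lemma solution_energy_le:
  assumes "solves_on UNIV \<rho> ybar y" "0 \<le> \<rho>"
  shows "energy \<rho> y \<le> (norm ybar)\<^sup>2"
proof -
  have "energy \<rho> y = inner ybar (\<iota> y)"
    using assms(1) by (simp add: solves_on_def energy_eq)
  then have Ey: "energy \<rho> y \<le> norm ybar * norm (\<iota> y)"
    by (simp add: norm_cauchy_schwarz)
  with norm_sq_le_energy[OF assms(2), of y] have "norm (\<iota> y) * norm (\<iota> y) \<le> norm ybar * norm (\<iota> y)"
    by (simp add: power2_eq_square)
  then have "norm (\<iota> y) \<le> norm ybar"
    by (rule le_of_square_le_mult) simp_all
  then have "norm ybar * norm (\<iota> y) \<le> (norm ybar)\<^sup>2"
    by (simp add: power2_eq_square mult_left_mono)
  with Ey show ?thesis by linarith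
qed

lemma solution_Dnorm_le:
  assumes "solves_on UNIV \<rho> (\<iota> yb) y" "0 < \<rho>"
  shows "Dnorm d y \<le> Dnorm d yb"
proof -
  have "inner (\<iota> y) (\<iota> (y - yb)) + \<rho> * d y (y - yb) = inner (\<iota> yb) (\<iota> (y - yb))"
    using assms(1) by (simp add: solves_on_def)
  then have "(norm (\<iota> (y - yb)))\<^sup>2 + \<rho> * d y (y - yb) = 0"
    using emb_linear by (simp add: power2_norm_eq_inner linear_diff inner_diff_left)
  then have "\<rho> * d y (y - yb) \<le> 0"
    using zero_le_power2[of "norm (\<iota> (y - yb))"] by linarith
  then have "d y (y - yb) \<le> 0"
    using \<open>0 < \<rho>\<close> by (simp add: mult_le_0_iff)
  moreover have "d (y - yb) (y - yb) = d y y - 2 * d y yb + d yb yb"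
    using d_bilinear d_sym[of yb y] by (simp add: bilinear_rsub bilinear_lsub)
  moreover have "d y (y - yb) = d y y - d y yb"
    using d_bilinear by (simp add: bilinear_rsub)
  ultimately have "d y y \<le> d yb yb" using d_nonneg[of "y - yb"] by linarith
  then show ?thesis by (simp add: Dnorm_def)
qed

lemma solution_D_repr:
  assumes "solves_on UNIV \<rho> ybar y" "0 < \<rho>"
  shows "D_repr \<iota> d y ((ybar - \<iota> y) /\<^sub>R \<rho>)"
  unfolding D_repr_def
proof
  fix v
  have "\<rho> * d y v = inner (ybar - \<iota> y) (\<iota> v)"
    using assms(1) by (simp add: solves_on_def inner_diff_left algebra_simps)
  then show "d y v = inner ((ybar - \<iota> y) /\<^sub>R \<rho>) (\<iota> v)"
    using \<open>0 < \<rho>\<close> by (simp only: inner_scaleR_left) (simp add: field_simps)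
qed

lemma solution_residual_le:
  assumes "solves_on UNIV \<rho> (\<iota> yb) y" "D_repr \<iota> d yb w" "0 < \<rho>"
  shows "norm (\<iota> yb - \<iota> y) \<le> \<rho> * norm w"
proof -
  define r where "r = \<iota> yb - \<iota> y"
  have r: "r = \<iota> (yb - y)" using emb_linear by (simp add: r_def linear_diff)
  have "inner (\<iota> y) (\<iota> (yb - y)) + \<rho> * d y (yb - y) = inner (\<iota> yb) (\<iota> (yb - y))"
    using assms(1) by (simp add: solves_on_def)
  then have "norm r * norm r = \<rho> * d y (yb - y)"
    by (simp add: power2_norm_eq_inner r_def inner_diff_left flip: r power2_eq_square)
  moreover have "d y (yb - y) = inner w r - d (yb - y) (yb - y)"
    using d_bilinear assms(2) by (simp add: D_repr_def r bilinear_lsub)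
  then have "d y (yb - y) \<le> norm w * norm r"
    using d_nonneg[of "yb - y"] norm_cauchy_schwarz[of w r] by linarith
  ultimately have "norm r * norm r \<le> (\<rho> * norm w) * norm r"
    using mult_left_mono[of _ _ \<rho>] \<open>0 < \<rho>\<close> by (simp add: mult.assoc)
  then show ?thesis unfolding r_def[symmetric]
    by (rule le_of_square_le_mult) (use \<open>0 < \<rho>\<close> in auto)
qed

lemma solution_D_repr_le:
  assumes "solves_on UNIV \<rho> (\<iota> yb) y" "D_repr \<iota> d yb w" "0 < \<rho>"
  obtains w' where "D_repr \<iota> d y w'" "norm w' \<le> norm w"
proof
  show "D_repr \<iota> d y ((\<iota> yb - \<iota> y) /\<^sub>R \<rho>)"
    using solution_D_repr assms by blast
  show "norm ((\<iota> yb - \<iota> y) /\<^sub>R \<rho>) \<le> norm w"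
    using solution_residual_le[OF assms] \<open>0 < \<rho>\<close>
    by (simp only: norm_scaleR) (simp add: field_simps)
qed

lemma energy_le_of_bounds:
  assumes "norm (\<iota> u) \<le> k1 * t * s" "Dnorm d u \<le> k2 * s"
  shows "energy (t\<^sup>2) u \<le> (k1\<^sup>2 + k2\<^sup>2) * t\<^sup>2 * s\<^sup>2"
proof -
  have "(norm (\<iota> u))\<^sup>2 \<le> (k1 * t * s)\<^sup>2"
    using assms(1) by (simp add: power_mono)
  moreover have "(Dnorm d u)\<^sup>2 \<le> (k2 * s)\<^sup>2"
    using assms(2) by (intro power_mono) (simp_all add: Dnorm_def d_nonneg)
  then have "t\<^sup>2 * (Dnorm d u)\<^sup>2 \<le> t\<^sup>2 * (k2 * s)\<^sup>2"
    by (simp add: mult_left_mono)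
  ultimately show ?thesis
    by (simp add: energy_def power_mult_distrib algebra_simps)
qed

lemma galerkin_error_le_data:
  assumes "subspace S" "solves_on UNIV \<rho> ybar y" "yh \<in> S" "solves_on S \<rho> ybar yh" "0 \<le> \<rho>"
  shows "energy \<rho> (y - yh) \<le> (norm ybar)\<^sup>2"
proof -
  have "energy \<rho> (y - yh) \<le> energy \<rho> (y - 0)"
    using galerkin_best_approximation[OF assms(1) solves_on_subset[OF assms(2) subset_UNIV] assms(3,4)
        subspace_0[OF assms(1)] assms(5)] by simp
  then show ?thesis using solution_energy_le assms by fastforce
qed

lemma galerkin_error_le_Dnorm:
  assumes "subspace S" "solves_on UNIV (t\<^sup>2) (\<iota> yb) y" "yh \<in> S" "solves_on S (t\<^sup>2) (\<iota> yb) yh"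
    and "p \<in> S" "0 < t"
    and "norm (\<iota> (y - p)) \<le> k1 * t * Dnorm d y" "Dnorm d (y - p) \<le> k2 * Dnorm d y"
  shows "energy (t\<^sup>2) (y - yh) \<le> (k1\<^sup>2 + k2\<^sup>2) * t\<^sup>2 * (Dnorm d yb)\<^sup>2"
proof -
  have "energy (t\<^sup>2) (y - yh) \<le> energy (t\<^sup>2) (y - p)"
    using galerkin_best_approximation[OF assms(1) solves_on_subset[OF assms(2) subset_UNIV] assms(3-5)] by simp
  also have "\<dots> \<le> (k1\<^sup>2 + k2\<^sup>2) * t\<^sup>2 * (Dnorm d y)\<^sup>2"
    using assms(7,8) by (rule energy_le_of_bounds)
  also have "\<dots> \<le> (k1\<^sup>2 + k2\<^sup>2) * t\<^sup>2 * (Dnorm d yb)\<^sup>2"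
    using solution_Dnorm_le[OF assms(2)] \<open>0 < t\<close>
    by (intro mult_left_mono power_mono) (auto simp: Dnorm_def d_nonneg)
  finally show ?thesis .
qed

lemma galerkin_error_le_D_repr:
  assumes "subspace S" "solves_on UNIV (t\<^sup>2) (\<iota> yb) y" "yh \<in> S" "solves_on S (t\<^sup>2) (\<iota> yb) yh"
    and "p \<in> S" "0 < t" "D_repr \<iota> d yb w"
    and "\<And>w'. D_repr \<iota> d y w' \<Longrightarrow> norm (\<iota> (y - p)) \<le> k1 * t\<^sup>2 * norm w'"
    and "\<And>w'. D_repr \<iota> d y w' \<Longrightarrow> Dnorm d (y - p) \<le> k2 * t * norm w'"
  shows "energy (t\<^sup>2) (y - yh) \<le> (k1\<^sup>2 + k2\<^sup>2) * t\<^sup>2 * (t\<^sup>2 * (norm w)\<^sup>2)"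
proof -
  obtain w' where w': "D_repr \<iota> d y w'" "norm w' \<le> norm w"
    using solution_D_repr_le assms(2,6,7) by (metis zero_less_power)
  have "energy (t\<^sup>2) (y - yh) \<le> energy (t\<^sup>2) (y - p)"
    using galerkin_best_approximation[OF assms(1) solves_on_subset[OF assms(2) subset_UNIV] assms(3-5)] by simp
  also have "\<dots> \<le> (k1\<^sup>2 + k2\<^sup>2) * t\<^sup>2 * (t * norm w')\<^sup>2"
    using assms(8,9)[OF w'(1)] by (intro energy_le_of_bounds) (simp_all add: power2_eq_square mult.assoc)
  also have "\<dots> \<le> (k1\<^sup>2 + k2\<^sup>2) * t\<^sup>2 * (t\<^sup>2 * (norm w)\<^sup>2)"
    using power_mono[OF w'(2) norm_ge_zero, of 2]
    by (intro mult_left_mono) (simp_all add: power_mult_distrib mult_left_mono)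
  finally show ?thesis .
qed

end

theorem mainTheorem3:
  fixes \<iota> :: "'y::{real_inner,complete_space} \<Rightarrow> 'h::{real_inner,complete_space}"
    and d :: "'y \<Rightarrow> 'y \<Rightarrow> real"
    and Yh :: "real \<Rightarrow> 'y set"
    and P :: "real \<Rightarrow> 'y \<Rightarrow> 'y"
    and h0 \<alpha> c1 c2 c3 c4 :: real
  assumes emb_lin: "bounded_linear \<iota>"
    and emb_inj: "inj \<iota>"
    and emb_dense: "closure (range \<iota>) = UNIV"
    and d_bilinear: "bilinear d"
    and d_sym: "\<And>u v. d u v = d v u"
    and d_bounded: "\<exists>M. \<forall>u v. \<bar>d u v\<bar> \<le> M * norm u * norm v"
    and d_elliptic: "\<exists>m>0. \<forall>u. d u u \<ge> m * (norm u)\<^sup>2"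
    and h0_pos: "h0 > 0"
    and alpha_pos: "\<alpha> > 0"
    and c_pos: "c1 > 0" "c2 > 0" "c3 > 0" "c4 > 0"
    and Yh_subspace: "\<And>h. 0 < h \<Longrightarrow> h \<le> h0 \<Longrightarrow> subspace (Yh h)"
    and Yh_findim: "\<And>h. 0 < h \<Longrightarrow> h \<le> h0 \<Longrightarrow> \<exists>B. finite B \<and> Yh h = span B"
    and P_into: "\<And>h y. 0 < h \<Longrightarrow> h \<le> h0 \<Longrightarrow> P h y \<in> Yh h"
    and P_est1: "\<And>h y. 0 < h \<Longrightarrow> h \<le> h0 \<Longrightarrow>
        norm (\<iota> (y - P h y)) \<le> c1 * h powr \<alpha> * Dnorm d y"
    and P_est2: "\<And>h y. 0 < h \<Longrightarrow> h \<le> h0 \<Longrightarrow>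
        Dnorm d (y - P h y) \<le> c2 * Dnorm d y"
    and P_est3: "\<And>h y w. 0 < h \<Longrightarrow> h \<le> h0 \<Longrightarrow> D_repr \<iota> d y w \<Longrightarrow>
        norm (\<iota> (y - P h y)) \<le> c3 * h powr (2 * \<alpha>) * norm w"
    and P_est4: "\<And>h y w. 0 < h \<Longrightarrow> h \<le> h0 \<Longrightarrow> D_repr \<iota> d y w \<Longrightarrow>
        Dnorm d (y - P h y) \<le> c4 * h powr \<alpha> * norm w"
  shows "\<exists>c>0. \<forall>h ybar y\<rho> y\<rho>h.
      0 < h \<and> h \<le> h0
      \<and> (\<forall>v. inner (\<iota> y\<rho>) (\<iota> v) + h powr (2 * \<alpha>) * d y\<rho> v = inner ybar (\<iota> v))
      \<and> y\<rho>h \<in> Yh h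
      \<and> (\<forall>v\<in>Yh h. inner (\<iota> y\<rho>h) (\<iota> v) + h powr (2 * \<alpha>) * d y\<rho>h v = inner ybar (\<iota> v))
      \<longrightarrow>
        (norm (\<iota> (y\<rho> - y\<rho>h)))\<^sup>2 + h powr (2 * \<alpha>) * (Dnorm d (y\<rho> - y\<rho>h))\<^sup>2
          \<le> c * (norm ybar)\<^sup>2
      \<and> (\<forall>yb. ybar = \<iota> yb \<longrightarrow>
          (norm (\<iota> (y\<rho> - y\<rho>h)))\<^sup>2 + h powr (2 * \<alpha>) * (Dnorm d (y\<rho> - y\<rho>h))\<^sup>2
            \<le> c * h powr (2 * \<alpha>) * (Dnorm d yb)\<^sup>2)
      \<and> (\<forall>yb w. ybar = \<iota> yb \<and> D_repr \<iota> d yb w \<longrightarrow>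
          (norm (\<iota> (y\<rho> - y\<rho>h)))\<^sup>2 + h powr (2 * \<alpha>) * (Dnorm d (y\<rho> - y\<rho>h))\<^sup>2
            \<le> c * h powr (4 * \<alpha>) * (norm w)\<^sup>2)"
proof -
  obtain m where "0 < m" "\<And>u. m * (norm u)\<^sup>2 \<le> d u u" using d_elliptic by blast
  then have "0 \<le> d u u" for u by (smt (verit) zero_le_power2 mult_nonneg_nonneg)
  moreover have "linear \<iota>" using emb_lin by (rule bounded_linear.linear)
  ultimately interpret tikhonov_problem \<iota> d
    using d_bilinear d_sym by (simp add: tikhonov_problem_def)
  define c where "c = 1 + c1\<^sup>2 + c2\<^sup>2 + c3\<^sup>2 + c4\<^sup>2"
  have c: "1 \<le> c" "c1\<^sup>2 + c2\<^sup>2 \<le> c" "c3\<^sup>2 + c4\<^sup>2 \<le> c"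
    by (simp_all add: c_def)
  show ?thesis
  proof (intro exI[of _ c] conjI allI impI)
    show "0 < c" using c(1) by simp
    fix h ybar y yh
    assume A: "0 < h \<and> h \<le> h0
      \<and> (\<forall>v. inner (\<iota> y) (\<iota> v) + h powr (2 * \<alpha>) * d y v = inner ybar (\<iota> v))
      \<and> yh \<in> Yh h
      \<and> (\<forall>v\<in>Yh h. inner (\<iota> yh) (\<iota> v) + h powr (2 * \<alpha>) * d yh v = inner ybar (\<iota> v))"
    define t where "t = h powr \<alpha>"
    have h: "0 < h" "h \<le> h0" and t: "0 < t" using A by (auto simp: t_def)
    have powr: "h powr (2 * \<alpha>) = t\<^sup>2" "h powr (4 * \<alpha>) = t\<^sup>2 * t\<^sup>2"
      using h by (simp_all add: t_def power2_eq_square flip: powr_add)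
    have sol: "solves_on UNIV (t\<^sup>2) ybar y" and gal: "solves_on (Yh h) (t\<^sup>2) ybar yh"
      using A by (auto simp: solves_on_def powr)
    have S: "subspace (Yh h)" and yh: "yh \<in> Yh h" using A Yh_subspace by blast+
    have err: "(norm (\<iota> (y - yh)))\<^sup>2 + h powr (2 * \<alpha>) * (Dnorm d (y - yh))\<^sup>2 = energy (t\<^sup>2) (y - yh)"
      by (simp add: energy_def powr)
    show "(norm (\<iota> (y - yh)))\<^sup>2 + h powr (2 * \<alpha>) * (Dnorm d (y - yh))\<^sup>2 \<le> c * (norm ybar)\<^sup>2"
      using galerkin_error_le_data[OF S sol yh gal] mult_right_mono[OF c(1), of "(norm ybar)\<^sup>2"]
      by (simp add: err)
    show "(norm (\<iota> (y - yh)))\<^sup>2 + h powr (2 * \<alpha>) * (Dnorm d (y - yh))\<^sup>2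
        \<le> c * h powr (2 * \<alpha>) * (Dnorm d yb)\<^sup>2" if yb: "ybar = \<iota> yb" for yb
      using galerkin_error_le_Dnorm[OF S sol[unfolded yb] yh gal[unfolded yb] P_into[OF h] t
          P_est1[OF h, folded t_def] P_est2[OF h]]
        mult_right_mono[OF c(2), of "t\<^sup>2 * (Dnorm d yb)\<^sup>2"]
      by (simp only: err) (simp add: powr mult.assoc)
    show "(norm (\<iota> (y - yh)))\<^sup>2 + h powr (2 * \<alpha>) * (Dnorm d (y - yh))\<^sup>2
        \<le> c * h powr (4 * \<alpha>) * (norm w)\<^sup>2" if data: "ybar = \<iota> yb \<and> D_repr \<iota> d yb w" for yb w
      using galerkin_error_le_D_repr[OF S sol[unfolded data[THEN conjunct1]] yh
          gal[unfolded data[THEN conjunct1]] P_into[OF h] t data[THEN conjunct2]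
          P_est3[OF h, unfolded powr] P_est4[OF h, folded t_def]]
        mult_right_mono[OF c(3), of "t\<^sup>2 * (t\<^sup>2 * (norm w)\<^sup>2)"]
      by (simp only: err) (simp add: powr mult.assoc)
  qed
qed

end
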